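(* Let $q=(n^2+3n)/2$, $n<p<q$, $\delta>0$, $\Lambda>0$, and let $\mathcal{Y}=\{y^0,y^1,\dots,y^p\}\subset\mathbb{R}^n$ be a $\Lambda$-poised set in $\overline{B}(y^0,\delta)$ in the minimum Frobenius norm sense. Let $\mathbf{L}_s\in\mathbb{R}^{p\times n}$ be the matrix whose $i$-th row is $(y^i-y^0)^T$, $i=1,\dots,p$, and $\hat{\mathbf{L}}_s=\frac1\delta\mathbf{L}_s$. Then \[ \|\hat{\mathbf{L}}_s^{\dagger}\|\le\Lambda\sqrt{2(n+1)}\,(p+1), \] where $\hat{\mathbf{L}}_s^{\dagger}$ is the Moore--Penrose pseudo-inverse of $\hat{\mathbf{L}}_s$.
   Context: $\overline{B}(x,\delta)$ is the closed Euclidean ball; $\|\cdot\|$ is the Euclidean norm / induced matrix norm, $\|\cdot\|_\infty$ the max norm. Natural basis of quadratic polynomials: $\overline\phi_L(x)=(1,x_1,\dots,x_n)$ and $\overline\phi_Q(x)=(\tfrac12x_1^2,x_1x_2,\dots,x_1x_n,\tfrac12x_2^2,\dots,x_{n-1}x_n,\tfrac12x_n^2)$. For a list of functions $\phi=(\phi_0,\dots,\phi_r)$, $\mathbf{M}(\phi,\mathcal{Y})$ is the $(p+1)\times(r+1)$ matrix with $(i,k)$ entry $\phi_k(y^i)$. $\mathcal{Y}$ is poised in the minimum Frobenius norm sense if the matrix $\begin{bmatrix}\mathbf{M}(\overline\phi_Q,\mathcal{Y})\mathbf{M}(\overline\phi_Q,\mathcal{Y})^T & \mathbf{M}(\overline\phi_L,\mathcal{Y})\\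 \mathbf{M}(\overline\phi_L,\mathcal{Y})^T & 0\end{bmatrix}$ is nonsingular. A poised set $\mathcal{Y}$ is $\Lambda$-poised in $B\subseteq\mathbb{R}^n$ in the minimum Frobenius norm sense if for every $x\in B$ the solution $\lambda(x)\in\mathbb{R}^{p+1}$ of $\min\frac12\|\mathbf{M}(\overline\phi_Q,\mathcal{Y})^T\lambda-\overline\phi_Q(x)\|^2$ subject to $\mathbf{M}(\overline\phi_L,\mathcal{Y})^T\lambda=\overline\phi_L(x)$ satisfies $\|\lambda(x)\|_\infty\le\Lambda$. *)

theory Defs
  imports "Jordan_Normal_Form.Determinant"
begin

definition vnorm :: "real vec \<Rightarrow> real" where
  "vnorm v = sqrt (v \<bullet> v)"

definition vnorm_inf :: "real vec \<Rightarrow> real" where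
  "vnorm_inf v = Max {\<bar>v $ i\<bar> | i. i < dim_vec v}"

definition opnorm :: "real mat \<Rightarrow> real" where
  "opnorm A = Sup {vnorm (A *\<^sub>v x) | x. x \<in> carrier_vec (dim_col A) \<and> vnorm x \<le> 1}"

definition is_pinv :: "real mat \<Rightarrow> real mat \<Rightarrow> bool" where
  "is_pinv A X \<longleftrightarrow> X \<in> carrier_mat (dim_col A) (dim_row A) \<and>
     A * X * A = A \<and> X * A * X = X \<and>
     transpose_mat (A * X) = A * X \<and> transpose_mat (X * A) = X * A"

definition pinv :: "real mat \<Rightarrow> real mat" where
  "pinv A = (THE X. is_pinv A X)"

definition phiL :: "nat \<Rightarrow> real vec \<Rightarrow> real vec" where
  "phiL n x = vec (n + 1) (\<lambda>k. if k = 0 then 1 else x $ (k - 1))"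

text \<open>Natural basis: quadratic part
  (x_1^2/2, x_1 x_2, ..., x_1 x_n, x_2^2/2, ..., x_{n-1} x_n, x_n^2/2) (0-based indices here).\<close>
definition phiQ :: "nat \<Rightarrow> real vec \<Rightarrow> real vec" where
  "phiQ n x = vec_of_list (concat (map (\<lambda>i. map (\<lambda>j. if j = i then x $ i ^ 2 / 2 else x $ i * x $ j)
                                                   [i..<n]) [0..<n]))"

definition MQ :: "nat \<Rightarrow> nat \<Rightarrow> (nat \<Rightarrow> real vec) \<Rightarrow> real mat" where
  "MQ n p y = mat_of_rows (n * (n + 1) div 2) (map (\<lambda>i. phiQ n (y i)) [0..<p + 1])"

definition MLin :: "nat \<Rightarrow> nat \<Rightarrow> (nat \<Rightarrow> real vec) \<Rightarrow> real mat" where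
  "MLin n p y = mat_of_rows (n + 1) (map (\<lambda>i. phiL n (y i)) [0..<p + 1])"

definition mfn_poised :: "nat \<Rightarrow> nat \<Rightarrow> (nat \<Rightarrow> real vec) \<Rightarrow> bool" where
  "mfn_poised n p y \<longleftrightarrow>
     det (four_block_mat (MQ n p y * transpose_mat (MQ n p y)) (MLin n p y)
                         (transpose_mat (MLin n p y)) (0\<^sub>m (n + 1) (n + 1))) \<noteq> 0"

definition mfn_solution :: "nat \<Rightarrow> nat \<Rightarrow> (nat \<Rightarrow> real vec) \<Rightarrow> real vec \<Rightarrow> real vec \<Rightarrow> bool" where
  "mfn_solution n p y x lam \<longleftrightarrow>
     lam \<in> carrier_vec (p + 1) \<and> transpose_mat (MLin n p y) *\<^sub>v lam = phiL n x \<and>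
     (\<forall>mu \<in> carrier_vec (p + 1). transpose_mat (MLin n p y) *\<^sub>v mu = phiL n x \<longrightarrow>
        (vnorm (transpose_mat (MQ n p y) *\<^sub>v lam - phiQ n x))\<^sup>2 / 2
          \<le> (vnorm (transpose_mat (MQ n p y) *\<^sub>v mu - phiQ n x))\<^sup>2 / 2)"

definition mfn_Lambda_poised :: "nat \<Rightarrow> nat \<Rightarrow> (nat \<Rightarrow> real vec) \<Rightarrow> real \<Rightarrow> real vec set \<Rightarrow> bool" where
  "mfn_Lambda_poised n p y \<Lambda> B \<longleftrightarrow> mfn_poised n p y \<and>
     (\<forall>x \<in> B. \<forall>lam. mfn_solution n p y x lam \<longrightarrow> vnorm_inf lam \<le> \<Lambda>)"

definition cball_vec :: "nat \<Rightarrow> real vec \<Rightarrow> real \<Rightarrow> real vec set" where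
  "cball_vec n c r = {x \<in> carrier_vec n. vnorm (x - c) \<le> r}"

definition Ls :: "nat \<Rightarrow> nat \<Rightarrow> (nat \<Rightarrow> real vec) \<Rightarrow> real mat" where
  "Ls n p y = mat p n (\<lambda>(i, j). y (i + 1) $ j - y 0 $ j)"

end

theory Submission
  imports Defs "HOL-Analysis.L2_Norm"
begin

(* For x on the sphere of radius delta about y^0, the minimum Frobenius norm multipliers lambda(x)
   exist because the KKT matrix of the least-squares problem is nonsingular, and the linear
   constraint M(phi_L, Y)^T lambda = phi_L(x) says sum_i lambda_i = 1 and sum_i lambda_i y^i = x.
   Hence w = (lambda_1, ..., lambda_p) solves L_s^T w = x - y^0 with |w| <= sqrt p |lambda|_inf
   <= sqrt p Lambda, and pairing with z gives delta |z| <= sqrt p Lambda |L_s z|, that is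
   |z| <= sqrt p Lambda |L z| for L = L_s / delta. So L has full column rank, its pseudo-inverse is
   (L^T L)^-1 L^T, and since L L^+ is an orthogonal projection,
   |L^+ w| <= sqrt p Lambda |L L^+ w| <= sqrt p Lambda |w|.
   This bound is sharper than the stated one. *)

section \<open>Euclidean norm and operator norm\<close>

lemma vnorm_eq_L2_set: "vnorm v = L2_set (\<lambda>i. v $ i) {0..<dim_vec v}"
  unfolding vnorm_def L2_set_def scalar_prod_def by (simp add: power2_eq_square)

lemma vnorm_nonneg: "vnorm v \<ge> 0"
  unfolding vnorm_eq_L2_set by (rule L2_set_nonneg)

lemma vnorm_square: "(vnorm v)\<^sup>2 = v \<bullet> v"
  unfolding vnorm_def using conjugate_square_ge_0_vec[of v] by simp

lemma vnorm_eq_0_iff: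
  assumes "v \<in> carrier_vec n"
  shows "vnorm v = 0 \<longleftrightarrow> v = 0\<^sub>v n"
proof -
  have "v \<bullet> v = 0 \<longleftrightarrow> v = 0\<^sub>v n"
    using conjugate_square_eq_0_vec[OF assms] by simp
  then show ?thesis unfolding vnorm_def by simp
qed

lemma vnorm_smult: "vnorm (t \<cdot>\<^sub>v v) = \<bar>t\<bar> * vnorm v"
  unfolding vnorm_eq_L2_set using L2_set_right_distrib[of "\<bar>t\<bar>" "\<lambda>i. v $ i"]
  by (simp add: L2_set_def power_mult_distrib)

lemma scalar_prod_le_vnorm:
  assumes "dim_vec w = dim_vec v"
  shows "v \<bullet> w \<le> vnorm v * vnorm w"
proof -
  have "v \<bullet> w = (\<Sum>i\<in>{0..<dim_vec v}. v $ i * w $ i)"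
    unfolding scalar_prod_def using assms by simp
  also have "\<dots> \<le> (\<Sum>i\<in>{0..<dim_vec v}. \<bar>v $ i\<bar> * \<bar>w $ i\<bar>)"
    by (intro sum_mono) (simp add: abs_mult[symmetric])
  also have "\<dots> \<le> vnorm v * vnorm w"
    unfolding vnorm_eq_L2_set assms by (rule L2_set_mult_ineq)
  finally show ?thesis .
qed

lemma vnorm_le_sqrt_dim:
  assumes "\<And>i. i < dim_vec v \<Longrightarrow> \<bar>v $ i\<bar> \<le> c"
  shows "vnorm v \<le> sqrt (dim_vec v) * c"
proof -
  have "vnorm v = L2_set (\<lambda>i. \<bar>v $ i\<bar>) {0..<dim_vec v}"
    unfolding vnorm_eq_L2_set L2_set_def by simp
  also have "\<dots> \<le> L2_set (\<lambda>i. c) {0..<dim_vec v}"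
    using assms by (intro L2_set_mono) auto
  also have "\<dots> = sqrt (dim_vec v) * c"
    using assms[of 0] by (cases "dim_vec v") (auto simp: L2_set_constant)
  finally show ?thesis .
qed

lemma abs_le_vnorm_inf: "i < dim_vec v \<Longrightarrow> \<bar>v $ i\<bar> \<le> vnorm_inf v"
  unfolding vnorm_inf_def by (intro Max_ge) auto

lemma vnorm_le_add_orthogonal:
  assumes "r \<in> carrier_vec m" "s \<in> carrier_vec m" "s \<bullet> r = 0"
  shows "vnorm r \<le> vnorm (r + s)"
proof -
  have "(r + s) \<bullet> (r + s) = r \<bullet> r + s \<bullet> s"
    using assms comm_scalar_prod[of r m s]
    by (simp add: add_scalar_prod_distrib[of _ m] scalar_prod_add_distrib[of _ m])
  then have "(vnorm r)\<^sup>2 \<le> (vnorm (r + s))\<^sup>2"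
    unfolding vnorm_square using conjugate_square_ge_0_vec[of s] by simp
  then show ?thesis using vnorm_nonneg by (rule power2_le_imp_le)
qed

lemma vnorm_le_if_symmetric_idempotent:
  assumes M: "M \<in> carrier_mat m m" and sym: "transpose_mat M = M" and idem: "M * M = M"
    and w: "w \<in> carrier_vec m"
  shows "vnorm (M *\<^sub>v w) \<le> vnorm w"
proof -
  have Mw: "M *\<^sub>v w \<in> carrier_vec m" using M w by simp
  have "(vnorm (M *\<^sub>v w))\<^sup>2 = (transpose_mat M *\<^sub>v (M *\<^sub>v w)) \<bullet> w"
    unfolding vnorm_square by (rule transpose_vec_mult_scalar[OF M w Mw, symmetric])
  also have "transpose_mat M *\<^sub>v (M *\<^sub>v w) = M *\<^sub>v w"
    unfolding sym using assoc_mult_mat_vec[OF M M w] idem by simp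
  also have "(M *\<^sub>v w) \<bullet> w \<le> vnorm (M *\<^sub>v w) * vnorm w"
    using M w by (intro scalar_prod_le_vnorm) simp
  finally have "vnorm (M *\<^sub>v w) * vnorm (M *\<^sub>v w) \<le> vnorm (M *\<^sub>v w) * vnorm w"
    by (simp add: power2_eq_square)
  then show ?thesis
    using vnorm_nonneg[of "M *\<^sub>v w"] vnorm_nonneg[of w] by (auto simp: mult_le_cancel_left)
qed

lemma opnorm_le:
  assumes "dim_col X = m" "c \<ge> 0" and bound: "\<And>w. w \<in> carrier_vec m \<Longrightarrow> vnorm (X *\<^sub>v w) \<le> c * vnorm w"
  shows "opnorm X \<le> c"
  unfolding opnorm_def
proof (rule cSup_least)
  have "vnorm (0\<^sub>v m) \<le> 1" unfolding vnorm_def by simp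
  then have "vnorm (X *\<^sub>v 0\<^sub>v m) \<in> {vnorm (X *\<^sub>v x) | x. x \<in> carrier_vec (dim_col X) \<and> vnorm x \<le> 1}"
    using assms(1) by fastforce
  then show "{vnorm (X *\<^sub>v x) | x. x \<in> carrier_vec (dim_col X) \<and> vnorm x \<le> 1} \<noteq> {}"
    by blast
next
  fix r assume "r \<in> {vnorm (X *\<^sub>v x) | x. x \<in> carrier_vec (dim_col X) \<and> vnorm x \<le> 1}"
  then obtain x where x: "x \<in> carrier_vec m" "vnorm x \<le> 1" and r: "r = vnorm (X *\<^sub>v x)"
    using assms(1) by auto
  have "r \<le> c * vnorm x" unfolding r using bound x(1) .
  also have "\<dots> \<le> c" using x(2) \<open>c \<ge> 0\<close> by (simp add: mult_left_le)
  finally show "r \<le> c" .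
qed

section \<open>Matrices of full column rank and their pseudo-inverses\<close>

lemma inverse_if_det_nonzero:
  fixes A :: "'a :: field mat"
  assumes "A \<in> carrier_mat n n" "det A \<noteq> 0"
  obtains B where "B \<in> carrier_mat n n" "A * B = 1\<^sub>m n" "B * A = 1\<^sub>m n"
  using det_non_zero_imp_unit[OF assms, of "()"] unfolding Units_def ring_mat_def by auto

lemma smult_mat_mult_vec:
  fixes A :: "'a :: comm_ring mat"
  assumes "A \<in> carrier_mat m n" "v \<in> carrier_vec n"
  shows "(t \<cdot>\<^sub>m A) *\<^sub>v v = t \<cdot>\<^sub>v (A *\<^sub>v v)"
  using assms by (intro eq_vecI) (auto simp: smult_scalar_prod_distrib[of _ n])

lemma is_pinv_carrier: "is_pinv A X \<Longrightarrow> X \<in> carrier_mat (dim_col A) (dim_row A)"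
  unfolding is_pinv_def by simp

lemma is_pinv_mult_eq_left:
  assumes X: "is_pinv A X" and Y: "is_pinv A Y"
  shows "X * (A * Y) = X"
proof -
  define m n where "m = dim_row A" and "n = dim_col A"
  have A: "A \<in> carrier_mat m n" and Xc: "X \<in> carrier_mat n m" and Yc: "Y \<in> carrier_mat n m"
    using is_pinv_carrier[OF X] is_pinv_carrier[OF Y] unfolding m_def n_def carrier_mat_def by auto
  have "transpose_mat A = transpose_mat (A * Y * A)"
    using Y unfolding is_pinv_def by simp
  also have "\<dots> = transpose_mat A * transpose_mat (A * Y)"
    using transpose_mult[of "A * Y" m m A n] A Yc by simp
  finally have At_AY: "transpose_mat A = transpose_mat A * (A * Y)"
    using Y unfolding is_pinv_def by simp
  have XXA: "X * (transpose_mat X * transpose_mat A) = X"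
    using X A Xc unfolding is_pinv_def by (auto simp: transpose_mult[of _ m n])
  have "X = X * (transpose_mat X * (transpose_mat A * (A * Y)))"
    using XXA At_AY by simp
  also have "\<dots> = (X * (transpose_mat X * transpose_mat A)) * (A * Y)"
    using assoc_mult_mat[of X n m "transpose_mat X * transpose_mat A" m "A * Y" m]
      assoc_mult_mat[of "transpose_mat X" m n "transpose_mat A" m "A * Y" m] A Xc Yc by simp
  also have "\<dots> = X * (A * Y)"
    unfolding XXA ..
  finally show ?thesis by simp
qed

lemma is_pinv_mult_eq_right:
  assumes X: "is_pinv A X" and Y: "is_pinv A Y"
  shows "X * (A * Y) = Y"
proof -
  define m n where "m = dim_row A" and "n = dim_col A"
  have A: "A \<in> carrier_mat m n" and Xc: "X \<in> carrier_mat n m" and Yc: "Y \<in> carrier_mat n m"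
    using is_pinv_carrier[OF X] is_pinv_carrier[OF Y] unfolding m_def n_def carrier_mat_def by auto
  have YAY: "Y * (A * Y) = Y" and YA: "transpose_mat A * transpose_mat Y = Y * A"
    using Y A Yc unfolding is_pinv_def by (auto simp: transpose_mult[of _ n m])
  have "transpose_mat A = transpose_mat (A * X * A)"
    using X unfolding is_pinv_def by simp
  also have "\<dots> = transpose_mat (X * A) * transpose_mat A"
    using transpose_mult[of A m n "X * A" n] A Xc by simp
  finally have At_XA: "transpose_mat A = X * (A * transpose_mat A)"
    using X A Xc unfolding is_pinv_def by simp
  have "Y = (Y * A) * Y"
    using YAY assoc_mult_mat[OF Yc A Yc] by simp
  also have "\<dots> = transpose_mat A * (transpose_mat Y * Y)"
    using A Yc by (simp flip: YA)
  also have "\<dots> = X * (A * ((transpose_mat A * transpose_mat Y) * Y))"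
    by (subst At_XA) (use A Xc Yc assoc_mult_mat[of X n m "A * transpose_mat A" m "transpose_mat Y * Y" m]
        assoc_mult_mat[of A m n "transpose_mat A" m "transpose_mat Y * Y" m] in simp)
  also have "\<dots> = X * (A * Y)"
    unfolding YA using assoc_mult_mat[OF Yc A Yc] YAY by simp
  finally show ?thesis by simp
qed

lemma is_pinv_unique: "is_pinv A X \<Longrightarrow> is_pinv A Y \<Longrightarrow> X = Y"
  using is_pinv_mult_eq_left is_pinv_mult_eq_right by metis

lemma pinv_eqI: "is_pinv A X \<Longrightarrow> pinv A = X"
  unfolding pinv_def by (rule the_equality) (auto dest: is_pinv_unique)

lemma is_pinv_left_inverse:
  assumes A: "A \<in> carrier_mat m n" and X: "X \<in> carrier_mat n m"
    and left: "X * A = 1\<^sub>m n" and sym: "transpose_mat (A * X) = A * X"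
  shows "is_pinv A X"
  unfolding is_pinv_def
proof (intro conjI)
  show "A * X * A = A"
    using A X left by (simp add: assoc_mult_mat[OF A X A])
  show "X * A * X = X"
    using X left by simp
qed (use A X left sym in auto)

lemma det_gram_nonzero:
  fixes A :: "real mat"
  assumes A: "A \<in> carrier_mat m n"
    and inj: "\<And>z. z \<in> carrier_vec n \<Longrightarrow> A *\<^sub>v z = 0\<^sub>v m \<Longrightarrow> z = 0\<^sub>v n"
  shows "det (transpose_mat A * A) \<noteq> 0"
proof
  assume "det (transpose_mat A * A) = 0"
  then obtain v where v: "v \<in> carrier_vec n" "v \<noteq> 0\<^sub>v n" "(transpose_mat A * A) *\<^sub>v v = 0\<^sub>v n"
    using det_0_iff_vec_prod_zero_field[of "transpose_mat A * A" n] A by auto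
  have Av: "A *\<^sub>v v \<in> carrier_vec m" using A v by simp
  have "(vnorm (A *\<^sub>v v))\<^sup>2 = (transpose_mat A *\<^sub>v (A *\<^sub>v v)) \<bullet> v"
    unfolding vnorm_square by (rule transpose_vec_mult_scalar[OF A v(1) Av, symmetric])
  also have "\<dots> = 0"
    using v A by simp
  finally have "A *\<^sub>v v = 0\<^sub>v m"
    using vnorm_eq_0_iff[OF Av] by simp
  with inj v show False by blast
qed

lemma is_pinv_gram_inverse:
  assumes A: "A \<in> carrier_mat m n" and B: "B \<in> carrier_mat n n"
    and right: "(transpose_mat A * A) * B = 1\<^sub>m n" and left: "B * (transpose_mat A * A) = 1\<^sub>m n"
  shows "is_pinv A (B * transpose_mat A)"
proof (rule is_pinv_left_inverse[OF A])
  let ?G = "transpose_mat A * A"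
  have G: "?G \<in> carrier_mat n n" using A by simp
  have "transpose_mat ?G = ?G"
    using A by (simp add: transpose_mult[of _ n m])
  then have BtG: "transpose_mat B * ?G = 1\<^sub>m n"
    using arg_cong[OF right, of transpose_mat] transpose_mult[OF G B] by simp
  have "transpose_mat B = transpose_mat B * (?G * B)"
    unfolding right using B by simp
  also have "\<dots> = (transpose_mat B * ?G) * B"
    by (rule assoc_mult_mat[symmetric, of _ n n _ n _ n]) (use B G in auto)
  also have "\<dots> = B"
    unfolding BtG using B by simp
  finally have B_sym: "transpose_mat B = B" .
  show "B * transpose_mat A * A = 1\<^sub>m n"
    using A B left by (simp add: assoc_mult_mat[of _ n m _ m A n])
  show "transpose_mat (A * (B * transpose_mat A)) = A * (B * transpose_mat A)"
    using A B B_sym transpose_mult[of A m n "B * transpose_mat A" m]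
      transpose_mult[of B n n "transpose_mat A" m] by simp
qed (use A B in simp)

lemma opnorm_le_if_is_pinv:
  assumes A: "A \<in> carrier_mat m n" and X: "is_pinv A X" and "c \<ge> 0"
    and bound: "\<And>z. z \<in> carrier_vec n \<Longrightarrow> vnorm z \<le> c * vnorm (A *\<^sub>v z)"
  shows "opnorm X \<le> c"
proof (rule opnorm_le)
  have Xc: "X \<in> carrier_mat n m" using is_pinv_carrier[OF X] A by simp
  then show "dim_col X = m" by simp
  fix w :: "real vec" assume w: "w \<in> carrier_vec m"
  have "vnorm (X *\<^sub>v w) \<le> c * vnorm (A *\<^sub>v (X *\<^sub>v w))"
    using bound Xc w by simp
  also have "A *\<^sub>v (X *\<^sub>v w) = (A * X) *\<^sub>v w"
    using A Xc w by simp
  also have "vnorm \<dots> \<le> vnorm w"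
    using X A Xc w unfolding is_pinv_def
    by (intro vnorm_le_if_symmetric_idempotent[of _ m]) (auto simp: assoc_mult_mat[of A m n X m "A * X" m])
  finally show "vnorm (X *\<^sub>v w) \<le> c * vnorm w"
    using \<open>c \<ge> 0\<close> by (simp add: mult_left_mono)
qed fact

lemma opnorm_pinv_le:
  fixes A :: "real mat"
  assumes A: "A \<in> carrier_mat m n" and "c \<ge> 0"
    and bound: "\<And>z. z \<in> carrier_vec n \<Longrightarrow> vnorm z \<le> c * vnorm (A *\<^sub>v z)"
  shows "opnorm (pinv A) \<le> c"
proof -
  have G: "transpose_mat A * A \<in> carrier_mat n n" using A by simp
  have "det (transpose_mat A * A) \<noteq> 0"
  proof (rule det_gram_nonzero[OF A])
    fix z assume "z \<in> carrier_vec n" "A *\<^sub>v z = 0\<^sub>v m"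
    then show "z = 0\<^sub>v n"
      using bound[of z] vnorm_nonneg[of z] vnorm_eq_0_iff[of z n] vnorm_eq_0_iff[of "0\<^sub>v m" m] by auto
  qed
  then obtain B where "B \<in> carrier_mat n n"
    "(transpose_mat A * A) * B = 1\<^sub>m n" "B * (transpose_mat A * A) = 1\<^sub>m n"
    using inverse_if_det_nonzero[OF G] by blast
  then have "is_pinv A (B * transpose_mat A)"
    by (rule is_pinv_gram_inverse[OF A])
  then show ?thesis
    using opnorm_le_if_is_pinv[OF A _ \<open>c \<ge> 0\<close> bound] by (simp add: pinv_eqI)
qed

lemma lower_bound_if_transpose_covers_sphere:
  fixes A :: "real mat"
  assumes A: "A \<in> carrier_mat m n" and "r > 0"
    and covers: "\<And>u. u \<in> carrier_vec n \<Longrightarrow> vnorm u = r \<Longrightarrow>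
      \<exists>w \<in> carrier_vec m. vnorm w \<le> c \<and> transpose_mat A *\<^sub>v w = u"
    and z: "z \<in> carrier_vec n"
  shows "r * vnorm z \<le> c * vnorm (A *\<^sub>v z)"
proof (cases "vnorm z = 0")
  case True
  then have "z = 0\<^sub>v n" using vnorm_eq_0_iff[OF z] by simp
  then have "A *\<^sub>v z = 0\<^sub>v m"
    using A by (intro eq_vecI) (auto simp: scalar_prod_right_zero[of _ n])
  then have "vnorm (A *\<^sub>v z) = 0" unfolding vnorm_def by simp
  then show ?thesis using True by simp
next
  case False
  then have z_pos: "vnorm z > 0" using vnorm_nonneg[of z] by simp
  define t where "t = r / vnorm z"
  have "vnorm (t \<cdot>\<^sub>v z) = r"
    unfolding vnorm_smult t_def using z_pos \<open>r > 0\<close> by simp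
  then obtain w where w: "w \<in> carrier_vec m" "vnorm w \<le> c" and Aw: "transpose_mat A *\<^sub>v w = t \<cdot>\<^sub>v z"
    using covers[of "t \<cdot>\<^sub>v z"] z by auto
  have "r * vnorm z = t * (z \<bullet> z)"
    unfolding t_def vnorm_square[symmetric] using z_pos by (simp add: power2_eq_square)
  also have "\<dots> = (transpose_mat A *\<^sub>v w) \<bullet> z"
    unfolding Aw using z by simp
  also have "\<dots> = w \<bullet> (A *\<^sub>v z)"
    by (rule transpose_vec_mult_scalar[OF A z w(1)])
  also have "\<dots> \<le> vnorm w * vnorm (A *\<^sub>v z)"
    using A w z by (intro scalar_prod_le_vnorm) simp
  also have "\<dots> \<le> c * vnorm (A *\<^sub>v z)"
    using w(2) vnorm_nonneg by (rule mult_right_mono)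
  finally show ?thesis .
qed

section \<open>Equality-constrained least squares\<close>

lemma kkt_system_solvable:
  fixes Q L :: "real mat"
  assumes Q: "Q \<in> carrier_mat N m" and L: "L \<in> carrier_mat N k"
    and f: "f \<in> carrier_vec m" and g: "g \<in> carrier_vec k"
    and nonsingular: "det (four_block_mat (Q * transpose_mat Q) L (transpose_mat L) (0\<^sub>m k k)) \<noteq> 0"
  obtains a d where "a \<in> carrier_vec N" "d \<in> carrier_vec k"
    "(Q * transpose_mat Q) *\<^sub>v a + L *\<^sub>v d = Q *\<^sub>v f" "transpose_mat L *\<^sub>v a = g"
proof -
  let ?K = "four_block_mat (Q * transpose_mat Q) L (transpose_mat L) (0\<^sub>m k k)"
  let ?b = "(Q *\<^sub>v f) @\<^sub>v g"
  have QQ: "Q * transpose_mat Q \<in> carrier_mat N N" using Q by simp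
  have LT: "transpose_mat L \<in> carrier_mat k N" using L by simp
  have K: "?K \<in> carrier_mat (N + k) (N + k)" using QQ L by simp
  obtain B where B: "B \<in> carrier_mat (N + k) (N + k)" "?K * B = 1\<^sub>m (N + k)"
    using inverse_if_det_nonzero[OF K nonsingular] by blast
  have b: "?b \<in> carrier_vec (N + k)" using Q f g by auto
  define a where "a = vec_first (B *\<^sub>v ?b) N"
  define d where "d = vec_last (B *\<^sub>v ?b) k"
  have a: "a \<in> carrier_vec N" and d: "d \<in> carrier_vec k" unfolding a_def d_def by auto
  have "?K *\<^sub>v (a @\<^sub>v d) = ?b"
    unfolding a_def d_def using B b by (simp flip: assoc_mult_mat_vec[OF K B(1) b])
  then have "((Q * transpose_mat Q) *\<^sub>v a + L *\<^sub>v d) @\<^sub>v (transpose_mat L *\<^sub>v a + 0\<^sub>m k k *\<^sub>v d) = ?b"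
    using four_block_mat_mult_vec[OF QQ L LT zero_carrier_mat a d] by simp
  then have "(Q * transpose_mat Q) *\<^sub>v a + L *\<^sub>v d = Q *\<^sub>v f"
    and "transpose_mat L *\<^sub>v a + 0\<^sub>m k k *\<^sub>v d = g"
    using append_vec_eq[of "(Q * transpose_mat Q) *\<^sub>v a + L *\<^sub>v d" N "Q *\<^sub>v f"] QQ L Q a d f by auto
  moreover have "transpose_mat L *\<^sub>v a + 0\<^sub>m k k *\<^sub>v d = transpose_mat L *\<^sub>v a"
    using LT a d by (intro eq_vecI) auto
  ultimately show thesis using that a d by simp
qed

lemma kkt_point_minimizes:
  fixes Q L :: "real mat"
  assumes Q: "Q \<in> carrier_mat N m" and L: "L \<in> carrier_mat N k" and f: "f \<in> carrier_vec m"
    and a: "a \<in> carrier_vec N" and d: "d \<in> carrier_vec k" and mu: "mu \<in> carrier_vec N"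
    and stationary: "(Q * transpose_mat Q) *\<^sub>v a + L *\<^sub>v d = Q *\<^sub>v f"
    and feasible: "transpose_mat L *\<^sub>v mu = transpose_mat L *\<^sub>v a"
  shows "vnorm (transpose_mat Q *\<^sub>v a - f) \<le> vnorm (transpose_mat Q *\<^sub>v mu - f)"
proof -
  (* The residual r at the KKT point is orthogonal to Q^T e for every e in the kernel of L^T. *)
  define e where "e = mu - a"
  define r where "r = transpose_mat Q *\<^sub>v a - f"
  define s where "s = transpose_mat Q *\<^sub>v e"
  have e: "e \<in> carrier_vec N" and r: "r \<in> carrier_vec m" and s: "s \<in> carrier_vec m"
    unfolding e_def r_def s_def using Q a f mu by auto
  have Le: "transpose_mat L *\<^sub>v e = 0\<^sub>v k"
    unfolding e_def using mult_minus_distrib_mat_vec[of "transpose_mat L" k N mu a] L mu a feasible by simp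
  have "e \<bullet> ((Q * transpose_mat Q) *\<^sub>v a) + e \<bullet> (L *\<^sub>v d) = e \<bullet> (Q *\<^sub>v f)"
    using scalar_prod_add_distrib[of e N] e Q L a d by (simp flip: stationary)
  moreover have "e \<bullet> (L *\<^sub>v d) = 0"
    using transpose_vec_mult_scalar[OF L d e] Le d by simp
  moreover have "s \<bullet> r = e \<bullet> (Q *\<^sub>v r)"
    unfolding s_def by (rule transpose_vec_mult_scalar[OF Q r e])
  moreover have "Q *\<^sub>v r = (Q * transpose_mat Q) *\<^sub>v a - Q *\<^sub>v f"
    unfolding r_def using Q a f by (simp add: mult_minus_distrib_mat_vec[of Q N m])
  moreover have "e \<bullet> ((Q * transpose_mat Q) *\<^sub>v a - Q *\<^sub>v f)
      = e \<bullet> ((Q * transpose_mat Q) *\<^sub>v a) - e \<bullet> (Q *\<^sub>v f)"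
    using Q e a f by (intro scalar_prod_minus_distrib[of e N]) auto
  ultimately have "s \<bullet> r = 0" by simp
  moreover have "transpose_mat Q *\<^sub>v mu - f = r + s"
    unfolding r_def s_def e_def using Q a f mu
    by (intro eq_vecI) (auto simp: mult_minus_distrib_mat_vec[of "transpose_mat Q" m N])
  ultimately show ?thesis
    unfolding r_def[symmetric] using vnorm_le_add_orthogonal[OF r s] by simp
qed

section \<open>Minimum Frobenius norm interpolation\<close>

lemma dim_phiQ: "dim_vec (phiQ n x) = n * (n + 1) div 2"
proof -
  have "dim_vec (phiQ n x) = (\<Sum>i<n. n - i)"
    unfolding phiQ_def by (simp add: length_concat comp_def sum_list_sum_nth lessThan_atLeast0)
  also have "\<dots> = (\<Sum>i<n. Suc i)"
    using sum.nat_diff_reindex[of "\<lambda>i. Suc i" n] by (simp add: Suc_diff_Suc)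
  also have "\<dots> = \<Sum>{0..n}"
    using sum.lessThan_Suc_shift[of "\<lambda>i. i" n] by (simp add: atLeast0AtMost lessThan_Suc_atMost)
  finally show ?thesis by (simp add: gauss_sum_nat)
qed

lemma MQ_carrier: "MQ n p y \<in> carrier_mat (p + 1) (n * (n + 1) div 2)"
  unfolding MQ_def using mat_of_rows_carrier(1)[of _ "map (\<lambda>i. phiQ n (y i)) [0..<p + 1]"] by simp

lemma MLin_carrier: "MLin n p y \<in> carrier_mat (p + 1) (n + 1)"
  unfolding MLin_def using mat_of_rows_carrier(1)[of _ "map (\<lambda>i. phiL n (y i)) [0..<p + 1]"] by simp

lemma mfn_solution_exists:
  assumes "mfn_poised n p y"
  shows "\<exists>lam. mfn_solution n p y x lam"
proof -
  have phiQ: "phiQ n x \<in> carrier_vec (n * (n + 1) div 2)" by (rule carrier_vecI[OF dim_phiQ])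
  have phiL: "phiL n x \<in> carrier_vec (n + 1)" unfolding phiL_def by simp
  obtain a d where a: "a \<in> carrier_vec (p + 1)" and d: "d \<in> carrier_vec (n + 1)"
    and stationary: "(MQ n p y * transpose_mat (MQ n p y)) *\<^sub>v a + MLin n p y *\<^sub>v d = MQ n p y *\<^sub>v phiQ n x"
    and feasible: "transpose_mat (MLin n p y) *\<^sub>v a = phiL n x"
    using kkt_system_solvable[OF MQ_carrier MLin_carrier phiQ phiL] assms unfolding mfn_poised_def by blast
  have "mfn_solution n p y x a"
    unfolding mfn_solution_def
  proof (intro conjI a feasible ballI impI)
    fix mu assume "mu \<in> carrier_vec (p + 1)" "transpose_mat (MLin n p y) *\<^sub>v mu = phiL n x"
    then have le: "vnorm (transpose_mat (MQ n p y) *\<^sub>v a - phiQ n x)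
        \<le> vnorm (transpose_mat (MQ n p y) *\<^sub>v mu - phiQ n x)"
      using kkt_point_minimizes[OF MQ_carrier MLin_carrier phiQ a d] stationary feasible by simp
    show "(vnorm (transpose_mat (MQ n p y) *\<^sub>v a - phiQ n x))\<^sup>2 / 2
        \<le> (vnorm (transpose_mat (MQ n p y) *\<^sub>v mu - phiQ n x))\<^sup>2 / 2"
      by (rule divide_right_mono[OF power_mono[OF le vnorm_nonneg]]) simp
  qed
  then show ?thesis by blast
qed

lemma mfn_solution_affine_combination:
  assumes "mfn_solution n p y x lam"
  shows "(\<Sum>i<p + 1. lam $ i) = 1" and "\<And>k. k < n \<Longrightarrow> (\<Sum>i<p + 1. lam $ i * y i $ k) = x $ k"
proof -
  have lam: "lam \<in> carrier_vec (p + 1)" and eq: "transpose_mat (MLin n p y) *\<^sub>v lam = phiL n x"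
    using assms unfolding mfn_solution_def by auto
  have entry: "(transpose_mat (MLin n p y) *\<^sub>v lam) $ j =
      (\<Sum>i<p + 1. (if j = 0 then 1 else y i $ (j - 1)) * lam $ i)" if "j < n + 1" for j
    using that lam unfolding MLin_def
    by (simp add: scalar_prod_def mat_of_rows_index phiL_def lessThan_atLeast0 mult.commute del: upt_Suc)
  show "(\<Sum>i<p + 1. lam $ i) = 1"
    using entry[of 0] eq by (simp add: phiL_def)
  show "(\<Sum>i<p + 1. lam $ i * y i $ k) = x $ k" if "k < n" for k
    using entry[of "k + 1"] eq that by (simp add: phiL_def mult.commute)
qed

lemma Ls_transpose_mult_tail:
  assumes x: "x \<in> carrier_vec n" and y0: "y 0 \<in> carrier_vec n"
    and sum_lam: "(\<Sum>i<p + 1. lam $ i) = 1"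
    and comb: "\<And>k. k < n \<Longrightarrow> (\<Sum>i<p + 1. lam $ i * y i $ k) = x $ k"
  shows "transpose_mat (Ls n p y) *\<^sub>v vec p (\<lambda>i. lam $ (i + 1)) = x - y 0"
proof (rule eq_vecI)
  fix k assume "k < dim_vec (x - y 0)"
  then have k: "k < n" using y0 by simp
  have tail_sum: "(\<Sum>i<p. lam $ (i + 1)) = 1 - lam $ 0"
    using sum_lam by (simp add: sum.lessThan_Suc_shift del: sum.lessThan_Suc)
  have tail_comb: "(\<Sum>i<p. lam $ (i + 1) * y (i + 1) $ k) = x $ k - lam $ 0 * y 0 $ k"
    using comb[OF k] by (simp add: sum.lessThan_Suc_shift del: sum.lessThan_Suc)
  have "(transpose_mat (Ls n p y) *\<^sub>v vec p (\<lambda>i. lam $ (i + 1))) $ k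
      = (\<Sum>i<p. lam $ (i + 1) * y (i + 1) $ k) - y 0 $ k * (\<Sum>i<p. lam $ (i + 1))"
    using k unfolding Ls_def
    by (simp add: scalar_prod_def lessThan_atLeast0 algebra_simps sum_subtractf sum_distrib_left)
  also have "\<dots> = (x $ k - lam $ 0 * y 0 $ k) - y 0 $ k * (1 - lam $ 0)"
    unfolding tail_sum tail_comb ..
  also have "\<dots> = (x - y 0) $ k"
    using k x y0 by (simp add: algebra_simps)
  finally show "(transpose_mat (Ls n p y) *\<^sub>v vec p (\<lambda>i. lam $ (i + 1))) $ k = (x - y 0) $ k" .
next
  show "dim_vec (transpose_mat (Ls n p y) *\<^sub>v vec p (\<lambda>i. lam $ (i + 1))) = dim_vec (x - y 0)"
    using carrier_vecD[OF y0] by (simp add: Ls_def)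
qed

lemma Ls_transpose_covers_cball:
  assumes poised: "mfn_Lambda_poised n p y \<Lambda> (cball_vec n (y 0) \<delta>)"
    and y0: "y 0 \<in> carrier_vec n" and x: "x \<in> cball_vec n (y 0) \<delta>"
  shows "\<exists>w \<in> carrier_vec p. vnorm w \<le> sqrt p * \<Lambda> \<and> transpose_mat (Ls n p y) *\<^sub>v w = x - y 0"
proof -
  obtain lam where sol: "mfn_solution n p y x lam"
    using mfn_solution_exists poised unfolding mfn_Lambda_poised_def by blast
  have lam: "lam \<in> carrier_vec (p + 1)"
    using sol unfolding mfn_solution_def by simp
  have "vnorm_inf lam \<le> \<Lambda>"
    using poised x sol unfolding mfn_Lambda_poised_def by blast
  then have "\<bar>lam $ i\<bar> \<le> \<Lambda>" if "i < p + 1" for i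
    using abs_le_vnorm_inf[of i lam] lam that by simp
  then have "vnorm (vec p (\<lambda>i. lam $ (i + 1))) \<le> sqrt p * \<Lambda>"
    using vnorm_le_sqrt_dim[of "vec p (\<lambda>i. lam $ (i + 1))" \<Lambda>] by simp
  moreover have "transpose_mat (Ls n p y) *\<^sub>v vec p (\<lambda>i. lam $ (i + 1)) = x - y 0"
    using x y0 mfn_solution_affine_combination[OF sol] unfolding cball_vec_def
    by (intro Ls_transpose_mult_tail) auto
  ultimately show ?thesis by (intro bexI[of _ "vec p (\<lambda>i. lam $ (i + 1))"]) auto
qed

lemma Ls_lower_bound:
  assumes poised: "mfn_Lambda_poised n p y \<Lambda> (cball_vec n (y 0) \<delta>)"
    and y0: "y 0 \<in> carrier_vec n" and "\<delta> > 0" and z: "z \<in> carrier_vec n"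
  shows "\<delta> * vnorm z \<le> sqrt p * \<Lambda> * vnorm (Ls n p y *\<^sub>v z)"
proof (rule lower_bound_if_transpose_covers_sphere[OF _ \<open>\<delta> > 0\<close> _ z])
  show "Ls n p y \<in> carrier_mat p n" unfolding Ls_def by simp
  fix u assume u: "u \<in> carrier_vec n" "vnorm u = \<delta>"
  have "(y 0 + u) - y 0 = u"
    using y0 u by (intro eq_vecI) auto
  moreover have "y 0 + u \<in> cball_vec n (y 0) \<delta>"
    using y0 u calculation unfolding cball_vec_def by simp
  ultimately show "\<exists>w \<in> carrier_vec p. vnorm w \<le> sqrt p * \<Lambda> \<and> transpose_mat (Ls n p y) *\<^sub>v w = u"
    using Ls_transpose_covers_cball[OF poised y0] by metis
qed

theorem theorem4:
  fixes n p q :: nat and \<delta> \<Lambda> :: real and y :: "nat \<Rightarrow> real vec"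
  assumes "q = (n\<^sup>2 + 3 * n) div 2"
    and "n < p" and "p < q"
    and "\<delta> > 0" and "\<Lambda> > 0"
    and "\<forall>i \<le> p. y i \<in> carrier_vec n"
    and "mfn_Lambda_poised n p y \<Lambda> (cball_vec n (y 0) \<delta>)"
  shows "opnorm (pinv ((1 / \<delta>) \<cdot>\<^sub>m Ls n p y)) \<le> \<Lambda> * sqrt (2 * (real n + 1)) * real (p + 1)"
proof -
  have Ls: "Ls n p y \<in> carrier_mat p n" unfolding Ls_def by simp
  have y0: "y 0 \<in> carrier_vec n" using assms(6) by simp
  have "vnorm z \<le> sqrt p * \<Lambda> * vnorm (((1 / \<delta>) \<cdot>\<^sub>m Ls n p y) *\<^sub>v z)" if "z \<in> carrier_vec n" for z
    using Ls_lower_bound[OF assms(7) y0 \<open>\<delta> > 0\<close> that] \<open>\<delta> > 0\<close>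
    by (simp add: smult_mat_mult_vec[OF Ls that] vnorm_smult field_simps)
  then have "opnorm (pinv ((1 / \<delta>) \<cdot>\<^sub>m Ls n p y)) \<le> sqrt p * \<Lambda>"
    using Ls \<open>\<Lambda> > 0\<close> by (intro opnorm_pinv_le[of _ p n]) auto
  also have "sqrt p * \<Lambda> \<le> \<Lambda> * sqrt (2 * (real n + 1)) * real (p + 1)"
  proof -
    have "sqrt p \<le> sqrt ((real p + 1)\<^sup>2)"
      by (rule real_sqrt_le_mono) (simp add: power2_eq_square algebra_simps)
    also have "\<dots> \<le> sqrt (2 * (real n + 1)) * (real p + 1)"
      by (simp add: mult_le_cancel_right2)
    finally have "sqrt p \<le> sqrt (2 * (real n + 1)) * (real p + 1)" .
    from mult_right_mono[OF this, of \<Lambda>] \<open>\<Lambda> > 0\<close> show ?thesis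
      by (simp add: ac_simps)
  qed
  finally show ?thesis .
qed

end
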